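(* For every integer $n\ge2$, the coefficient of $u\,v^{n+1}w^{n-2}$ in $P_{n/(n+1)}(u,v,w)$ (i.e. the coefficient at the lattice point $(1,n+1)$ of the Newton polygon) equals $7n-10$.
   Context: Markov polynomials. Let $x,y,z$ be indeterminates. Consider the set consisting of all rationals $\rho\in[0,1]$, each written in lowest terms $\rho=a/b$ with integers $a\ge 0$, $b\ge 1$, together with the formal symbol $1/0$. Define Laurent polynomials $M_\rho(x,y,z)$ recursively by $M_{1/0}=y$, $M_{0/1}=x$, $M_{1/1}=\frac{x^2+y^2}{z}$, and: whenever $a/b$, $c/d$ are in this set with $|ad-bc|=1$ and $(a+2c)/(b+2d)\in[0,1]$, then $M_{\frac{a+2c}{b+2d}}=\big(M_{c/d}^2+M_{\frac{a+c}{b+d}}^2\big)/M_{a/b}$. This determines $M_\rho$ for every rational $\rho\in[0,1]$. Numerator. For coprime $1\le a\le b$, $P_{a/b}(u,v,w)$ denotes the homogeneous polynomial of degree $a+b-1$ such that $M_{a/b}(x,y,z)=P_{a/b}(x^2,y^2,z^2)/(x^{a-1}y^{b-1}z^{a+b-1})$; its existence is known. *)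

theory Defs
  imports Complex_Main "HOL-Computational_Algebra.Polynomial"
begin

text \<open>Markov polynomials M_rho, rho = a/b encoded as the pair (a,b) of naturals
(the formal symbol 1/0 is the pair (1,0)). The Laurent polynomial M_rho(x,y,z) is
represented by its values as a real function of positive reals x,y,z.\<close>

inductive Markov_rel :: "nat \<times> nat \<Rightarrow> (real \<Rightarrow> real \<Rightarrow> real \<Rightarrow> real) \<Rightarrow> bool" where
  base_inf: "Markov_rel (1, 0) (\<lambda>x y z. y)"
| base_0: "Markov_rel (0, 1) (\<lambda>x y z. x)"
| base_1: "Markov_rel (1, 1) (\<lambda>x y z. (x\<^sup>2 + y\<^sup>2) / z)"
| step: "\<lbrakk> Markov_rel (a, b) f; Markov_rel (c, d) g; Markov_rel (a + c, b + d) h;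
           \<bar>int a * int d - int b * int c\<bar> = 1; a + 2 * c \<le> b + 2 * d \<rbrakk>
         \<Longrightarrow> Markov_rel (a + 2 * c, b + 2 * d)
               (\<lambda>x y z. ((g x y z)\<^sup>2 + (h x y z)\<^sup>2) / f x y z)"

text \<open>Trivariate integer polynomials: P :: int poly poly poly, outer variable u,
then v, innermost w.\<close>

definition eval3 :: "int poly poly poly \<Rightarrow> real \<Rightarrow> real \<Rightarrow> real \<Rightarrow> real" where
  "eval3 P u v w =
     poly (map_poly (\<lambda>q. poly (map_poly (\<lambda>r. poly (map_poly of_int r) w) q) v) P) u"

definition coeff3 :: "int poly poly poly \<Rightarrow> nat \<Rightarrow> nat \<Rightarrow> nat \<Rightarrow> int" where
  "coeff3 P i j k = coeff (coeff (coeff P i) j) k"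

end

theory Submission
  imports Defs
begin

text \<open>The fractions 1/0, 0/1, 1/2, 2/3, ... are the Farey neighbours of 1/1, and the recursion
  builds each of them from the previous two and from m = M(1/1), through the exchange relation
  X(k+2) X(k) = m^2 + X(k+1)^2. This relation is linearised by its invariant
  (X(k+2) + X(k)) / X(k+1) = (x^2 + y^2 + m^2) / (xy). Clearing denominators, the numerators obey
  Q(k+2) = (u+v)(u+v+w) Q(k+1) - u v w^2 Q(k). Modulo u^2 this recursion is triangular: the
  constant term in u is v^(k+2) (v+w)^k for Q(k+1), and the coefficient of u then has a closed
  form from which the coefficient of u v^(n+1) w^(n-2) is read off.\<close>

text \<open>For k \<ge> 2 a recursion step reaching k/(k+1) must start from (k-2)/(k-1) and 1/1.\<close>

lemma ray_step_parents:
  fixes k a b c d :: nat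
  assumes "k \<ge> 2" "a + 2 * c = k" "b + 2 * d = k + 1"
    and "\<bar>int a * int d - int b * int c\<bar> = 1"
  shows "c = 1 \<and> d = 1"
proof -
  define e where "e = int d - int c"
  have a: "int a = int k - 2 * int c" and b: "int b = int k + 1 - 2 * int d"
    using assms(2,3) by simp_all
  have "int a * int d - int b * int c = int k * e - int c"
    unfolding a b e_def by (simp add: algebra_simps)
  with assms(4) have det: "\<bar>int k * e - int c\<bar> = 1" by simp
  have bounds: "2 * int c \<le> int k" "2 * int d \<le> int k + 1"
    using assms(2,3) by linarith+
  consider "e = 0" | "e = 1" | "e \<ge> 2" | "e \<le> -1" by linarith
  then show ?thesis
  proof cases
    case 3
    then have "int k * e \<ge> int k * 2" by (intro mult_left_mono) auto
    then show ?thesis using det bounds assms(1) by linarith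
  next
    case 4
    then have "int k * e \<le> int k * -1" by (intro mult_left_mono) auto
    then show ?thesis using det bounds assms(1) by linarith
  qed (use det bounds assms(1) e_def in auto)
qed

lemma Markov_rel_1_0D: "Markov_rel (1, 0) f \<Longrightarrow> f = (\<lambda>x y z. y)"
  by (erule Markov_rel.cases) auto

lemma Markov_rel_0_1D: "Markov_rel (0, 1) f \<Longrightarrow> f = (\<lambda>x y z. x)"
  by (erule Markov_rel.cases) auto

lemma Markov_rel_1_1D: "Markov_rel (1, 1) f \<Longrightarrow> f = (\<lambda>x y z. (x\<^sup>2 + y\<^sup>2) / z)"
proof (erule Markov_rel.cases)
  fix a b c d :: nat
  assume "(1, 1) = (a + 2 * c, b + 2 * d)" "\<bar>int a * int d - int b * int c\<bar> = 1"
  then show "f = (\<lambda>x y z. (x\<^sup>2 + y\<^sup>2) / z)" by (cases c; cases d) auto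
qed auto

text \<open>The chain M(1/0), M(0/1), M(1/2), M(2/3), ... of Farey neighbours of 1/1:
  the function \<open>markov_chain (Suc k)\<close> is M(k/(k+1)).\<close>

fun markov_chain :: "nat \<Rightarrow> real \<Rightarrow> real \<Rightarrow> real \<Rightarrow> real" where
  "markov_chain 0 x y z = y"
| "markov_chain (Suc 0) x y z = x"
| "markov_chain (Suc (Suc k)) x y z =
     (((x\<^sup>2 + y\<^sup>2) / z)\<^sup>2 + (markov_chain (Suc k) x y z)\<^sup>2) / markov_chain k x y z"

lemma Markov_rel_ray: "Markov_rel (k, k + 1) f \<Longrightarrow> f = markov_chain (Suc k)"
proof (induction k arbitrary: f rule: less_induct)
  case (less k)
  consider "k = 0" | "k = 1" | "k \<ge> 2" by linarith
  then show ?case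
  proof cases
    case 1
    from less.prems show ?thesis
    proof (cases rule: Markov_rel.cases)
      case (step a b f' c d g h)
      with 1 have "a = 0" "c = 0" by simp_all
      with step show ?thesis by simp
    qed (use 1 in simp_all)
  next
    case 2
    from less.prems show ?thesis
    proof (cases rule: Markov_rel.cases)
      case (step a b f' c d g h)
      then have "a = 1" "c = 0" using 2 by auto
      with step 2 have "b = 0" "d = 1" by auto
      with step have "Markov_rel (1, 0) f'" "Markov_rel (0, 1) g" "Markov_rel (1, 1) h"
        by simp_all
      then have "f' = (\<lambda>x y z. y)" "g = (\<lambda>x y z. x)" "h = (\<lambda>x y z. (x\<^sup>2 + y\<^sup>2) / z)"
        by (simp_all add: Markov_rel_1_0D Markov_rel_0_1D Markov_rel_1_1D)
      with step have "f = (\<lambda>x y z. (((x\<^sup>2 + y\<^sup>2) / z)\<^sup>2 + x\<^sup>2) / y)"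
        by (simp add: add.commute)
      with 2 show ?thesis by (simp add: fun_eq_iff)
    qed (use 2 in auto)
  next
    case 3
    from less.prems show ?thesis
    proof (cases rule: Markov_rel.cases)
      case (step a b f' c d g h)
      then have "c = 1" "d = 1" using ray_step_parents[OF 3, of a c b d] by auto
      moreover obtain j where j: "k = Suc (Suc j)" using 3 by (metis add_2_eq_Suc le_Suc_ex)
      ultimately have "a = j" "b = j + 1" using step by auto
      with step \<open>c = 1\<close> \<open>d = 1\<close>
      have parents: "Markov_rel (j, j + 1) f'" "Markov_rel (Suc j, Suc j + 1) h" "Markov_rel (1, 1) g"
        by simp_all
      then have "f' = markov_chain (Suc j)" "h = markov_chain (Suc (Suc j))"
        using j by (auto intro: less.IH simp del: markov_chain.simps)
      moreover have "g = (\<lambda>x y z. (x\<^sup>2 + y\<^sup>2) / z)"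
        using parents(3) by (rule Markov_rel_1_1D)
      moreover note \<open>f = (\<lambda>x y z. ((g x y z)\<^sup>2 + (h x y z)\<^sup>2) / f' x y z)\<close>
      ultimately show ?thesis using j by (simp add: fun_eq_iff)
    qed (use 3 in auto)
  qed
qed

lemma markov_chain_pos:
  assumes "x > 0" "y > 0" "z > 0"
  shows "markov_chain k x y z > 0"
  using assms by (induction k x y z rule: markov_chain.induct) (auto intro!: divide_pos_pos add_pos_nonneg)

lemma exchange_linear:
  fixes a b c m t :: "'a :: field"
  assumes "b \<noteq> 0" "c * a = m\<^sup>2 + b\<^sup>2" "c + a = t * b"
  shows "(m\<^sup>2 + c\<^sup>2) / b + b = t * c"
proof -
  have "(m\<^sup>2 + c\<^sup>2) / b + b = c * (c + a) / b"
    using assms(1,2) by (simp add: field_simps power2_eq_square)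
  also have "\<dots> = t * c" using assms(1,3) by simp
  finally show ?thesis .
qed

definition chain_trace :: "real \<Rightarrow> real \<Rightarrow> real \<Rightarrow> real" where
  "chain_trace x y z = (x\<^sup>2 + y\<^sup>2 + ((x\<^sup>2 + y\<^sup>2) / z)\<^sup>2) / (x * y)"

lemma markov_chain_linear:
  assumes "x > 0" "y > 0" "z > 0"
  shows "markov_chain (Suc (Suc k)) x y z + markov_chain k x y z
           = chain_trace x y z * markov_chain (Suc k) x y z"
proof (induction k)
  case 0
  show ?case using assms by (simp add: chain_trace_def field_simps power2_eq_square)
next
  case (Suc k)
  have "markov_chain k x y z \<noteq> 0" "markov_chain (Suc k) x y z \<noteq> 0"
    using markov_chain_pos[OF assms] by (simp_all add: less_imp_neq[symmetric])
  then show ?case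
    using exchange_linear[OF _ _ Suc.IH, where m = "(x\<^sup>2 + y\<^sup>2) / z"] by simp
qed

lemma map_poly_add:
  assumes "\<And>a b. f (a + b) = f a + f b" "f 0 = 0"
  shows "map_poly f (p + q) = map_poly f p + map_poly f q"
  by (rule poly_eqI) (simp add: coeff_map_poly assms)

lemma map_poly_mult:
  fixes f :: "'a::comm_ring_1 \<Rightarrow> 'b::comm_ring_1"
  assumes "\<And>a b. f (a + b) = f a + f b" "f 0 = 0" "\<And>a b. f (a * b) = f a * f b"
  shows "map_poly f (p * q) = map_poly f p * map_poly f q"
proof (rule poly_eqI)
  fix n
  have "f (\<Sum>i\<le>n. coeff p i * coeff q (n - i)) = (\<Sum>i\<le>n. f (coeff p i * coeff q (n - i)))"
    using sum_comp_morphism[of f _ "{..n}", OF assms(2,1)] by (simp add: o_def)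
  then show "coeff (map_poly f (p * q)) n = coeff (map_poly f p * map_poly f q) n"
    by (simp add: coeff_map_poly assms coeff_mult)
qed

definition eval1 :: "real \<Rightarrow> int poly \<Rightarrow> real" where
  "eval1 w r = poly (map_poly of_int r) w"

definition eval2 :: "real \<Rightarrow> real \<Rightarrow> int poly poly \<Rightarrow> real" where
  "eval2 v w q = poly (map_poly (eval1 w) q) v"

lemma eval1_hom: "eval1 w (a + b) = eval1 w a + eval1 w b" "eval1 w 0 = 0"
    "eval1 w (a * b) = eval1 w a * eval1 w b"
  by (simp_all add: eval1_def map_poly_add map_poly_mult)

lemma eval2_hom: "eval2 v w (a + b) = eval2 v w a + eval2 v w b" "eval2 v w 0 = 0"
    "eval2 v w (a * b) = eval2 v w a * eval2 v w b"
  by (simp_all add: eval2_def map_poly_add map_poly_mult eval1_hom)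

lemma eval3_eq: "eval3 P u v w = poly (map_poly (eval2 v w) P) u"
  unfolding eval3_def eval2_def eval1_def by simp

lemma eval3_add: "eval3 (p + q) u v w = eval3 p u v w + eval3 q u v w"
  by (simp add: eval3_eq map_poly_add eval2_hom)

lemma eval3_diff: "eval3 (p - q) u v w = eval3 p u v w - eval3 q u v w"
  using eval3_add[of "p - q" q] by simp

lemma eval3_mult: "eval3 (p * q) u v w = eval3 p u v w * eval3 q u v w"
  by (simp add: eval3_eq map_poly_mult eval2_hom)

lemma eval3_1: "eval3 1 u v w = 1"
  by (simp add: eval3_eq eval2_def eval1_def)

lemma eval3_power: "eval3 (p ^ n) u v w = eval3 p u v w ^ n"
  by (induction n) (simp_all add: eval3_mult eval3_1)

lemma poly_eqI_pos:
  fixes p q :: "real poly"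
  assumes "\<And>x. x > 0 \<Longrightarrow> poly p x = poly q x"
  shows "p = q"
proof (rule ccontr)
  assume "p \<noteq> q"
  then have "finite {x. poly (p - q) x = 0}" by (intro poly_roots_finite) simp
  moreover have "{0<..} \<subseteq> {x. poly (p - q) x = 0}" using assms by auto
  ultimately show False using infinite_Ioi finite_subset by blast
qed

lemma eval1_eqI: "(\<And>w. w > 0 \<Longrightarrow> eval1 w a = eval1 w b) \<Longrightarrow> a = b"
  unfolding eval1_def
  by (drule poly_eqI_pos) (metis coeff_map_poly of_int_0 of_int_eq_iff poly_eqI)

lemma eval2_eqI:
  assumes "\<And>v w. v > 0 \<Longrightarrow> w > 0 \<Longrightarrow> eval2 v w a = eval2 v w b"
  shows "a = b"
proof (rule poly_eqI)
  fix j
  have "\<And>w. w > 0 \<Longrightarrow> map_poly (eval1 w) a = map_poly (eval1 w) b"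
    by (rule poly_eqI_pos) (use assms in \<open>simp add: eval2_def\<close>)
  then show "coeff a j = coeff b j"
    by (intro eval1_eqI) (metis coeff_map_poly eval1_hom(2))
qed

lemma eval3_eqI:
  assumes "\<And>u v w. u > 0 \<Longrightarrow> v > 0 \<Longrightarrow> w > 0 \<Longrightarrow> eval3 P u v w = eval3 Q u v w"
  shows "P = Q"
proof (rule poly_eqI)
  fix j
  have "\<And>v w. v > 0 \<Longrightarrow> w > 0 \<Longrightarrow> map_poly (eval2 v w) P = map_poly (eval2 v w) Q"
    by (rule poly_eqI_pos) (use assms in \<open>simp add: eval3_eq\<close>)
  then show "coeff P j = coeff Q j"
    by (intro eval2_eqI) (metis coeff_map_poly eval2_hom(2))
qed

lemma eval3_squares_eqI:
  assumes "\<And>x y z. x > 0 \<Longrightarrow> y > 0 \<Longrightarrow> z > 0 \<Longrightarrow>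
             eval3 P (x\<^sup>2) (y\<^sup>2) (z\<^sup>2) = eval3 Q (x\<^sup>2) (y\<^sup>2) (z\<^sup>2)"
  shows "P = Q"
  using assms[of "sqrt _" "sqrt _" "sqrt _"] by (intro eval3_eqI) simp

definition var_u :: "int poly poly poly" where "var_u = [:0, 1:]"
definition var_v :: "int poly poly poly" where "var_v = [:[:0, 1:]:]"
definition var_w :: "int poly poly poly" where "var_w = [:[:[:0, 1:]:]:]"

lemma eval3_var: "eval3 var_u u v w = u" "eval3 var_v u v w = v" "eval3 var_w u v w = w"
  by (simp_all add: eval3_eq eval2_def eval1_def var_u_def var_v_def var_w_def map_poly_pCons)

definition ray_trace :: "int poly poly poly" where
  "ray_trace = (var_u + var_v) * (var_u + var_v + var_w)"

definition ray_det :: "int poly poly poly" where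
  "ray_det = var_u * var_v * var_w\<^sup>2"

fun ray_num :: "nat \<Rightarrow> int poly poly poly" where
  "ray_num 0 = 1"
| "ray_num (Suc 0) = var_u * var_w + (var_u + var_v)\<^sup>2"
| "ray_num (Suc (Suc k)) = ray_trace * ray_num (Suc k) - ray_det * ray_num k"

lemma markov_chain_ray_num:
  assumes "x > 0" "y > 0" "z > 0"
  shows "markov_chain (Suc k) x y z * (x ^ k * y ^ k * z ^ (2 * k))
           = x * eval3 (ray_num k) (x\<^sup>2) (y\<^sup>2) (z\<^sup>2)"
proof (induction k rule: ray_num.induct)
  case 1
  then show ?case by (simp add: eval3_1)
next
  case 2
  have "eval3 (ray_num 1) (x\<^sup>2) (y\<^sup>2) (z\<^sup>2) = x\<^sup>2 * z\<^sup>2 + (x\<^sup>2 + y\<^sup>2)\<^sup>2"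
    by (simp only: ray_num.simps One_nat_def eval3_add eval3_mult eval3_power eval3_var)
  then show ?case using assms by (simp add: field_simps power2_eq_square)
next
  case (3 k)
  define E where "E p = eval3 p (x\<^sup>2) (y\<^sup>2) (z\<^sup>2)" for p
  define D where "D j = x ^ j * y ^ j * z ^ (2 * j)" for j
  define t where "t = chain_trace x y z"
  have "E ray_trace = (x\<^sup>2 + y\<^sup>2) * (x\<^sup>2 + y\<^sup>2 + z\<^sup>2)"
    unfolding E_def ray_trace_def by (simp only: eval3_add eval3_mult eval3_var)
  then have trace: "E ray_trace = t * x * y * z\<^sup>2"
    using assms unfolding t_def chain_trace_def by (simp add: field_simps power2_eq_square)
  have det: "E ray_det = x\<^sup>2 * y\<^sup>2 * (z\<^sup>2)\<^sup>2"
    unfolding E_def ray_det_def by (simp add: eval3_mult eval3_power eval3_var)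
  have D_Suc: "D (Suc j) = x * y * z\<^sup>2 * D j" for j
    unfolding D_def by (simp add: power2_eq_square)
  have lin: "markov_chain (Suc (Suc (Suc k))) x y z
      = t * markov_chain (Suc (Suc k)) x y z - markov_chain (Suc k) x y z"
    using markov_chain_linear[OF assms, of "Suc k"] unfolding t_def
    by (simp add: eq_diff_eq del: markov_chain.simps)
  have "markov_chain (Suc (Suc (Suc k))) x y z * D (Suc (Suc k))
      = (t * x * y * z\<^sup>2) * (markov_chain (Suc (Suc k)) x y z * D (Suc k))
        - (x\<^sup>2 * y\<^sup>2 * (z\<^sup>2)\<^sup>2) * (markov_chain (Suc k) x y z * D k)"
    unfolding lin D_Suc by (simp add: algebra_simps power2_eq_square del: markov_chain.simps)
  also have "\<dots> = x * E (ray_num (Suc (Suc k)))"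
  proof -
    have IH: "markov_chain (Suc (Suc k)) x y z * D (Suc k) = x * E (ray_num (Suc k))"
        "markov_chain (Suc k) x y z * D k = x * E (ray_num k)"
      using 3 unfolding D_def E_def by simp_all
    have rec: "E (ray_num (Suc (Suc k))) = E ray_trace * E (ray_num (Suc k)) - E ray_det * E (ray_num k)"
      unfolding E_def by (simp add: eval3_diff eval3_mult)
    show ?thesis unfolding rec IH trace det by (simp add: algebra_simps)
  qed
  finally show ?case unfolding D_def E_def .
qed

lemma Markov_rel_ray_num:
  assumes "Markov_rel (k, k + 1) M" "k \<ge> 1" "x > 0" "y > 0" "z > 0"
  shows "M x y z * (x ^ (k - 1) * y ^ k * z ^ (2 * k)) = eval3 (ray_num k) (x\<^sup>2) (y\<^sup>2) (z\<^sup>2)"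
proof -
  have "x ^ k = x * x ^ (k - 1)" using assms(2) by (simp add: power_eq_if)
  then show ?thesis
    using markov_chain_ray_num[OF assms(3-5), of k] Markov_rel_ray[OF assms(1)] assms(3)
    by (simp add: algebra_simps)
qed

lemma coeff_mult_1: "coeff (p * q) (Suc 0) = coeff p 0 * coeff q (Suc 0) + coeff p (Suc 0) * coeff q 0"
  by (simp add: coeff_mult)

lemma coeff_power_1: "coeff (p ^ m) (Suc 0) = of_nat m * coeff p 0 ^ (m - 1) * coeff p (Suc 0)"
proof (induction m)
  case (Suc m)
  then show ?case
    by (cases m) (simp_all add: coeff_mult_1 coeff_mult_0 coeff_0_power algebra_simps)
qed simp

text \<open>Coefficients in u are polynomials in v (outer variable) and w (inner variable).\<close>

definition bivar_v :: "int poly poly" where "bivar_v = [:0, 1:]"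
definition bivar_w :: "int poly poly" where "bivar_w = [:[:0, 1:]:]"

lemma coeff_var:
  "coeff var_u 0 = 0" "coeff var_u (Suc 0) = 1"
  "coeff var_v 0 = bivar_v" "coeff var_v (Suc 0) = 0"
  "coeff var_w 0 = bivar_w" "coeff var_w (Suc 0) = 0"
  by (simp_all add: var_u_def var_v_def var_w_def bivar_v_def bivar_w_def)

lemma coeff_bivar_v_power_mult: "coeff (bivar_v ^ j * p) (j + i) = coeff p i"
  by (simp add: bivar_v_def monom_altdef[of 1, simplified, symmetric] coeff_monom_mult)

lemma coeff_ray_trace:
  "coeff ray_trace 0 = bivar_v * (bivar_v + bivar_w)" "coeff ray_trace (Suc 0) = 2 * bivar_v + bivar_w"
  by (simp_all add: ray_trace_def coeff_mult_1 coeff_mult_0 coeff_var)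

lemma coeff_ray_det: "coeff ray_det 0 = 0" "coeff ray_det (Suc 0) = bivar_v * bivar_w\<^sup>2"
  by (simp_all add: ray_det_def coeff_mult_1 coeff_mult_0 coeff_var power2_eq_square)

lemma ray_num_coeff_0: "coeff (ray_num (Suc k)) 0 = bivar_v ^ (k + 2) * (bivar_v + bivar_w) ^ k"
proof (induction k)
  case 0
  then show ?case by (simp add: coeff_mult_0 coeff_var power2_eq_square)
next
  case (Suc k)
  then show ?case
    by (simp add: coeff_mult_0 coeff_ray_trace coeff_ray_det algebra_simps)
qed

lemma ray_num_coeff_1_rec:
  "coeff (ray_num (Suc (Suc k))) 1 =
     bivar_v * (bivar_v + bivar_w) * coeff (ray_num (Suc k)) 1
     + (2 * bivar_v + bivar_w) * coeff (ray_num (Suc k)) 0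
     - bivar_v * bivar_w\<^sup>2 * coeff (ray_num k) 0"
  by (simp add: coeff_mult_1 coeff_mult_0 coeff_ray_trace coeff_ray_det)

lemma ray_num_coeff_1_one: "coeff (ray_num 1) 1 = 2 * bivar_v + bivar_w"
  by (simp add: coeff_mult_1 coeff_mult_0 coeff_var power2_eq_square)

lemma ray_num_coeff_1_two: "coeff (ray_num 2) 1 = 4 * bivar_v\<^sup>2 * (bivar_v + bivar_w)"
  using ray_num_coeff_1_rec[of 0] ray_num_coeff_1_one ray_num_coeff_0[of 0] ray_num.simps(1)
  by (simp add: numeral_2_eq_2 algebra_simps power2_eq_square del: ray_num.simps)

definition ray_quad :: "nat \<Rightarrow> int poly poly" where
  "ray_quad k = of_nat (2 * k) * bivar_v\<^sup>2 + of_nat (3 * k + 2) * bivar_v * bivar_w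
                + 4 * bivar_w\<^sup>2"

lemma ray_num_coeff_1:
  "coeff (ray_num (m + 3)) 1 = bivar_v ^ (m + 3) * ((bivar_v + bivar_w) ^ m * ray_quad (m + 3))"
proof (induction m)
  case 0
  show ?case
    using ray_num_coeff_1_rec[of 1] ray_num_coeff_1_two ray_num_coeff_0[of 1] ray_num_coeff_0[of 0]
    by (simp add: ray_quad_def eval_nat_numeral algebra_simps del: ray_num.simps)
next
  case (Suc m)
  define p where "p = bivar_v ^ (m + 3) * (bivar_v + bivar_w) ^ m"
  have a3: "coeff (ray_num (m + 3)) 0 = p * (bivar_v * (bivar_v + bivar_w)\<^sup>2)"
    and a2: "coeff (ray_num (m + 2)) 0 = p * (bivar_v + bivar_w)"
    using ray_num_coeff_0[of "m + 2"] ray_num_coeff_0[of "m + 1"] unfolding p_def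
    by (simp_all add: power_add eval_nat_numeral algebra_simps del: ray_num.simps)
  have b3: "coeff (ray_num (m + 3)) 1 = p * ray_quad (m + 3)"
    using Suc.IH unfolding p_def by (simp add: algebra_simps)
  have quad: "ray_quad (Suc m + 3) =
      ray_quad (m + 3) + (2 * bivar_v + bivar_w) * (bivar_v + bivar_w) - bivar_w\<^sup>2"
    unfolding ray_quad_def by (simp add: algebra_simps power2_eq_square)
  have "coeff (ray_num (Suc m + 3)) 1 = bivar_v * (bivar_v + bivar_w) * coeff (ray_num (m + 3)) 1
      + (2 * bivar_v + bivar_w) * coeff (ray_num (m + 3)) 0
      - bivar_v * bivar_w\<^sup>2 * coeff (ray_num (m + 2)) 0"
    using ray_num_coeff_1_rec[of "m + 2"] by (simp add: eval_nat_numeral del: ray_num.simps)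
  also have "\<dots> = p * bivar_v * (bivar_v + bivar_w) * ray_quad (Suc m + 3)"
    unfolding a3 a2 b3 quad by (simp add: algebra_simps power2_eq_square)
  finally show ?case unfolding p_def by (simp add: eval_nat_numeral algebra_simps)
qed

lemma coeff_ray_tail:
  "coeff ((bivar_v + bivar_w) ^ m * ray_quad k) 1 = monom (of_nat (4 * m + 3 * k + 2)) (m + 1)"
proof -
  define t :: "int poly" where "t = [:0, 1:]"
  have vw: "coeff (bivar_v + bivar_w) 0 = t" "coeff (bivar_v + bivar_w) (Suc 0) = 1"
    by (simp_all add: bivar_v_def bivar_w_def t_def)
  have quad: "coeff (ray_quad k) 0 = 4 * t\<^sup>2" "coeff (ray_quad k) (Suc 0) = of_nat (3 * k + 2) * t"
    by (simp_all add: ray_quad_def bivar_v_def bivar_w_def t_def coeff_mult_1 coeff_mult_0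
        power2_eq_square of_nat_poly numeral_poly)
  have "coeff ((bivar_v + bivar_w) ^ m * ray_quad k) 1
      = t ^ m * (of_nat (3 * k + 2) * t) + of_nat m * t ^ (m - 1) * (4 * t\<^sup>2)"
    unfolding One_nat_def coeff_mult_1 coeff_power_1 coeff_0_power vw quad by simp
  also have "\<dots> = of_nat (4 * m + 3 * k + 2) * t ^ (m + 1)"
    by (cases m) (simp_all add: algebra_simps power2_eq_square)
  finally show ?thesis
    by (simp add: t_def monom_altdef of_nat_poly smult_monom)
qed

lemma coeff3_ray_num:
  assumes "n \<ge> 2"
  shows "coeff3 (ray_num n) 1 (n + 1) (n - 2) = 7 * int n - 10"
proof (cases "n = 2")
  case True
  have "coeff (ray_num 2) 1 = bivar_v ^ 2 * (4 * (bivar_v + bivar_w))"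
    using ray_num_coeff_1_two by (simp add: algebra_simps)
  then have "coeff (coeff (ray_num 2) 1) (2 + 1) = coeff (4 * (bivar_v + bivar_w)) 1"
    by (simp only: coeff_bivar_v_power_mult)
  also have "\<dots> = 4" by (simp add: bivar_v_def bivar_w_def numeral_poly)
  finally show ?thesis using True by (simp add: coeff3_def numeral_poly)
next
  case False
  with assms obtain m where m: "n = m + 3" by (intro that[of "n - 3"]) simp
  have "coeff (coeff (ray_num (m + 3)) 1) (m + 3 + 1) = monom (of_nat (7 * m + 11)) (m + 1)"
    unfolding ray_num_coeff_1 coeff_bivar_v_power_mult coeff_ray_tail by simp
  then show ?thesis using m by (simp add: coeff3_def)
qed

theorem mainTheorem19:
  fixes n :: nat and M :: "real \<Rightarrow> real \<Rightarrow> real \<Rightarrow> real" and P :: "int poly poly poly"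
  assumes "n \<ge> 2"
    and "Markov_rel (n, n + 1) M"
    and "\<forall>x y z. x > 0 \<longrightarrow> y > 0 \<longrightarrow> z > 0 \<longrightarrow>
           M x y z = eval3 P (x\<^sup>2) (y\<^sup>2) (z\<^sup>2) / (x ^ (n - 1) * y ^ n * z ^ (2 * n))"
  shows "coeff3 P 1 (n + 1) (n - 2) = 7 * int n - 10"
proof -
  have "P = ray_num n"
  proof (rule eval3_squares_eqI)
    fix x y z :: real
    assume pos: "x > 0" "y > 0" "z > 0"
    then have "x ^ (n - 1) * y ^ n * z ^ (2 * n) \<noteq> 0" by simp
    then show "eval3 P (x\<^sup>2) (y\<^sup>2) (z\<^sup>2) = eval3 (ray_num n) (x\<^sup>2) (y\<^sup>2) (z\<^sup>2)"
      using assms(3) pos Markov_rel_ray_num[OF assms(2) _ pos] assms(1) by simp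
  qed
  then show ?thesis using coeff3_ray_num[OF assms(1)] by simp
qed

end
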